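(* Let $q$ be a self-join-free Boolean conjunctive query that has the key-join property. Then for all atoms $F,G\in q$, if $F$ attacks $G$ in the attack graph of $q$, there exists a sequence of atoms $F_0,F_1,\dots,F_\ell$ of $q$ such that $F_0=F$, $F_\ell=G$, and $\mathrm{key}(F_i)\subseteq\mathrm{vars}(F_{i-1})$ for all $i\in\{1,\dots,\ell\}$.
   Context: Every relation name has a signature $[n,k]$ ($1\le k\le n$; primary-key positions $1,\dots,k$) and a mode in $\{\mathsf{c},\mathsf{i}\}$. For an atom $F$, $\mathrm{key}(F)$ is the set of variables at primary-key positions and $\mathrm{vars}(F)$ the set of all its variables. A self-join-free Boolean conjunctive query is a finite set of atoms with pairwise distinct relation names. $q$ has the key-join property if for all $F,G\in q$, either $\mathrm{vars}(F)\cap\mathrm{vars}(G)\in\{\emptyset,\mathrm{key}(F),\mathrm{key}(G)\}$ or $\mathrm{vars}(F)\cap\mathrm{vars}(G)\supseteq\mathrm{key}(F)\cup\mathrm{key}(G)$. Attack graph: $\mathcal{K}(p)=\{\mathrm{key}(F)\to\mathrm{vars}(F)\mid F\in p\}$ (functional dependencies over variables); $q^{\mathsf{c}}$ = atoms of $q$ of mode $\mathsf{c}$; $F^{+,q}$ = set of variables $x$ of $q$ with $\mathcal{K}(q\setminus\{F\})\cup\mathcal{K}(q^{\mathsf{c}})\models\mathrm{key}(F)\to x$. $F$ attacks $G$ ($F\ne G$) iff there are atoms $F_0=F,\dots,F_m=G$ of $q$ and variables $x_i\in(\mathrm{vars}(F_{i-1})\cap\mathrm{vars}(F_i))\setminus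 F^{+,q}$ for $1\le i\le m$. *)

theory Defs
  imports Main
begin

datatype mode = ModeC | ModeI

datatype ('v,'c) qterm = Var 'v | Const 'c

text \<open>An atom is a relation name together with its argument list.
  The schema is given by: arity ar R = n, key length kl R = k (signature [n,k]),
  and mode md R.\<close>
type_synonym ('r,'v,'c) atom = "'r \<times> ('v,'c) qterm list"

definition tvars :: "('v,'c) qterm list \<Rightarrow> 'v set" where
  "tvars ts = {x. Var x \<in> set ts}"

definition vars :: "('r,'v,'c) atom \<Rightarrow> 'v set" where
  "vars F = tvars (snd F)"

definition key :: "('r \<Rightarrow> nat) \<Rightarrow> ('r,'v,'c) atom \<Rightarrow> 'v set" where
  "key kl F = tvars (take (kl (fst F)) (snd F))"

definition wf_atom :: "('r \<Rightarrow> nat) \<Rightarrow> ('r \<Rightarrow> nat) \<Rightarrow> ('r,'v,'c) atom \<Rightarrow> bool" where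
  "wf_atom ar kl F \<longleftrightarrow> 1 \<le> kl (fst F) \<and> kl (fst F) \<le> ar (fst F) \<and> length (snd F) = ar (fst F)"

definition sjf_query :: "('r \<Rightarrow> nat) \<Rightarrow> ('r \<Rightarrow> nat) \<Rightarrow> ('r,'v,'c) atom set \<Rightarrow> bool" where
  "sjf_query ar kl q \<longleftrightarrow> finite q \<and> (\<forall>F\<in>q. wf_atom ar kl F)
     \<and> (\<forall>F\<in>q. \<forall>G\<in>q. fst F = fst G \<longrightarrow> F = G)"

definition key_join_property :: "('r \<Rightarrow> nat) \<Rightarrow> ('r,'v,'c) atom set \<Rightarrow> bool" where
  "key_join_property kl q \<longleftrightarrow> (\<forall>F\<in>q. \<forall>G\<in>q.
     vars F \<inter> vars G \<in> {{}, key kl F, key kl G} \<or>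
     key kl F \<union> key kl G \<subseteq> vars F \<inter> vars G)"

text \<open>Functional dependencies over variables and their (semantic) entailment:
  every relation (set of tuples = valuations of the variables) satisfying all
  dependencies in the set also satisfies the implied one.\<close>
definition fd_sat :: "('v \<Rightarrow> nat) set \<Rightarrow> 'v set \<times> 'v set \<Rightarrow> bool" where
  "fd_sat r fd \<longleftrightarrow> (\<forall>s\<in>r. \<forall>t\<in>r. (\<forall>x\<in>fst fd. s x = t x) \<longrightarrow> (\<forall>y\<in>snd fd. s y = t y))"

definition fd_entails :: "('v set \<times> 'v set) set \<Rightarrow> 'v set \<times> 'v set \<Rightarrow> bool" where
  "fd_entails \<Sigma> fd \<longleftrightarrow> (\<forall>r :: ('v \<Rightarrow> nat) set. (\<forall>d\<in>\<Sigma>. fd_sat r d) \<longrightarrow> fd_sat r fd)"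

definition Kfd :: "('r \<Rightarrow> nat) \<Rightarrow> ('r,'v,'c) atom set \<Rightarrow> ('v set \<times> 'v set) set" where
  "Kfd kl p = {(key kl F, vars F) | F. F \<in> p}"

definition qvars :: "('r,'v,'c) atom set \<Rightarrow> 'v set" where
  "qvars q = (\<Union>F\<in>q. vars F)"

definition cpart :: "('r \<Rightarrow> mode) \<Rightarrow> ('r,'v,'c) atom set \<Rightarrow> ('r,'v,'c) atom set" where
  "cpart md q = {F\<in>q. md (fst F) = ModeC}"

definition Fplus :: "('r \<Rightarrow> nat) \<Rightarrow> ('r \<Rightarrow> mode) \<Rightarrow> ('r,'v,'c) atom set \<Rightarrow> ('r,'v,'c) atom \<Rightarrow> 'v set" where
  "Fplus kl md q F = {x\<in>qvars q. fd_entails (Kfd kl (q - {F}) \<union> Kfd kl (cpart md q)) (key kl F, {x})}"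

definition attacks :: "('r \<Rightarrow> nat) \<Rightarrow> ('r \<Rightarrow> mode) \<Rightarrow> ('r,'v,'c) atom set \<Rightarrow> ('r,'v,'c) atom \<Rightarrow> ('r,'v,'c) atom \<Rightarrow> bool" where
  "attacks kl md q F G \<longleftrightarrow> F \<noteq> G \<and> (\<exists>path. path \<noteq> [] \<and> hd path = F \<and> last path = G \<and> set path \<subseteq> q \<and>
     (\<forall>i. Suc i < length path \<longrightarrow>
        (\<exists>x. x \<in> (vars (path ! i) \<inter> vars (path ! Suc i)) - Fplus kl md q F)))"

end

theory Submission
  imports Defs
begin

(* Call a sequence of atoms of q a key path if the key of each atom is contained in the
   variables of its predecessor. Along an attack path F = F_0, ..., F_m = G consecutive
   atoms share a variable outside F+, hence outside key(F), and every F_i is reached from F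
   by a key path: given a key path H_0 = F, ..., H_k = F_i and a variable x shared by F_i and
   F_(i+1), the key-join property applied to H_j and F_(i+1) either yields
   key(F_(i+1)) \<subseteq> vars(H_j), so the path can be cut at H_j and extended, or places x in
   key(H_j) \<subseteq> vars(H_(j-1)), so the argument moves back one atom. It cannot reach H_0,
   since x \<notin> key(F). *)

lemma rtranclp_imp_successively_path:
  assumes "R\<^sup>*\<^sup>* x y" "x \<in> A" "\<And>a b. R a b \<Longrightarrow> b \<in> A"
  shows "\<exists>p. p \<noteq> [] \<and> hd p = x \<and> last p = y \<and> set p \<subseteq> A \<and> successively R p"
  using assms(1)
proof (induction rule: rtranclp_induct)
  case base
  show ?case using assms(2) by (intro exI[of _ "[x]"]) simp
next
  case (step y z)
  then obtain p where "p \<noteq> []" "hd p = x" "last p = y" "set p \<subseteq> A" "successively R p"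
    by blast
  with step.hyps(2) assms(3) show ?case
    by (intro exI[of _ "p @ [z]"]) (auto simp: successively_append_iff)
qed

lemma successively_imp_rtranclp:
  "p \<noteq> [] \<Longrightarrow> successively R p \<Longrightarrow> R\<^sup>*\<^sup>* (hd p) (last p)"
  by (induction R p rule: successively.induct) (auto intro: converse_rtranclp_into_rtranclp)

lemma key_subset_vars: "key kl F \<subseteq> vars F"
  unfolding key_def vars_def tvars_def using set_take_subset by fastforce

lemma key_subset_Fplus:
  assumes "F \<in> q"
  shows "key kl F \<subseteq> Fplus kl md q F"
proof
  fix x assume x: "x \<in> key kl F"
  then have "x \<in> qvars q"
    using assms key_subset_vars[of kl F] unfolding qvars_def by blast
  moreover have "fd_entails \<Sigma> (key kl F, {x})" for \<Sigma>
    using x unfolding fd_entails_def fd_sat_def by simp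
  ultimately show "x \<in> Fplus kl md q F"
    unfolding Fplus_def by simp
qed

lemma key_join_property_shared_var:
  assumes "key_join_property kl q" "H \<in> q" "G \<in> q" "x \<in> vars H" "x \<in> vars G"
  shows "key kl G \<subseteq> vars H \<or> x \<in> key kl H"
proof -
  have "vars H \<inter> vars G \<in> {{}, key kl H, key kl G} \<or>
      key kl H \<union> key kl G \<subseteq> vars H \<inter> vars G"
    using assms(1-3) unfolding key_join_property_def by blast
  then show ?thesis
    using assms(4,5) by blast
qed

definition key_step :: "('r \<Rightarrow> nat) \<Rightarrow> ('r,'v,'c) atom set \<Rightarrow> ('r,'v,'c) atom \<Rightarrow> ('r,'v,'c) atom \<Rightarrow> bool"
  where "key_step kl q H G \<longleftrightarrow> G \<in> q \<and> key kl G \<subseteq> vars H"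

definition shares_var_outside :: "'v set \<Rightarrow> ('r,'v,'c) atom set \<Rightarrow> ('r,'v,'c) atom \<Rightarrow> ('r,'v,'c) atom \<Rightarrow> bool"
  where "shares_var_outside X q H G \<longleftrightarrow> G \<in> q \<and> vars H \<inter> vars G - X \<noteq> {}"

lemma rtranclp_key_step_extend:
  assumes "(key_step kl q)\<^sup>*\<^sup>* F H" "F \<in> q" "key_join_property kl q"
    and "G \<in> q" "x \<in> vars H" "x \<in> vars G" "x \<notin> key kl F"
  shows "(key_step kl q)\<^sup>*\<^sup>* F G"
  using assms(1,5)
proof (induction rule: rtranclp_induct)
  case base
  then have "key kl G \<subseteq> vars F"
    using key_join_property_shared_var[OF assms(3,2,4) _ assms(6)] assms(7) by blast
  then have "key_step kl q F G"
    using assms(4) by (simp add: key_step_def)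
  then show ?case by (rule r_into_rtranclp)
next
  case (step H H')
  then have "H' \<in> q" "key kl H' \<subseteq> vars H"
    by (simp_all add: key_step_def)
  with key_join_property_shared_var[OF assms(3) _ assms(4) step.prems assms(6)]
  consider "key kl G \<subseteq> vars H'" | "x \<in> vars H"
    by blast
  then show ?case
  proof cases
    case 1
    then have "key_step kl q H' G"
      using assms(4) by (simp add: key_step_def)
    with step.hyps(1,2) show ?thesis
      by (meson rtranclp.rtrancl_into_rtrancl)
  next
    case 2
    then show ?thesis by (rule step.IH)
  qed
qed

lemma rtranclp_shares_var_outside_key_imp_key_step:
  assumes "(shares_var_outside (key kl F) q)\<^sup>*\<^sup>* F G" "F \<in> q" "key_join_property kl q"
  shows "(key_step kl q)\<^sup>*\<^sup>* F G"
  using assms(1)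
proof (induction rule: rtranclp_induct)
  case (step H G)
  then obtain x where "G \<in> q" "x \<in> vars H" "x \<in> vars G" "x \<notin> key kl F"
    unfolding shares_var_outside_def by blast
  with step.IH show ?case
    using rtranclp_key_step_extend assms(2,3) by metis
qed simp

lemma attacks_imp_rtranclp_shares_var_outside_key:
  assumes "attacks kl md q F G" "F \<in> q"
  shows "(shares_var_outside (key kl F) q)\<^sup>*\<^sup>* F G"
proof -
  obtain p where p: "p \<noteq> []" "hd p = F" "last p = G" "set p \<subseteq> q"
     "\<forall>i. Suc i < length p \<longrightarrow>
        (\<exists>x. x \<in> (vars (p ! i) \<inter> vars (p ! Suc i)) - Fplus kl md q F)"
    using assms(1) unfolding attacks_def by blast
  have "successively (shares_var_outside (key kl F) q) p"
    unfolding successively_conv_nth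
  proof (intro allI impI)
    fix i assume i: "Suc i < length p"
    then obtain x where "x \<in> vars (p ! i) \<inter> vars (p ! Suc i)" "x \<notin> Fplus kl md q F"
      using p(5) by blast
    moreover have "p ! Suc i \<in> q"
      using i p(4) nth_mem by blast
    ultimately show "shares_var_outside (key kl F) q (p ! i) (p ! Suc i)"
      using key_subset_Fplus[OF assms(2)] unfolding shares_var_outside_def by blast
  qed
  then have "(shares_var_outside (key kl F) q)\<^sup>*\<^sup>* (hd p) (last p)"
    by (rule successively_imp_rtranclp[OF p(1)])
  then show ?thesis
    using p(2,3) by simp
qed

theorem lemma34:
  fixes ar kl :: "'r \<Rightarrow> nat" and md :: "'r \<Rightarrow> mode" and q :: "('r,'v,'c) atom set"
  assumes "sjf_query ar kl q"
    and "key_join_property kl q"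
    and "F \<in> q" and "G \<in> q"
    and "attacks kl md q F G"
  shows "\<exists>path. path \<noteq> [] \<and> hd path = F \<and> last path = G \<and> set path \<subseteq> q \<and>
     (\<forall>i. Suc i < length path \<longrightarrow> key kl (path ! Suc i) \<subseteq> vars (path ! i))"
proof -
  have "(shares_var_outside (key kl F) q)\<^sup>*\<^sup>* F G"
    by (rule attacks_imp_rtranclp_shares_var_outside_key[OF assms(5,3)])
  then have "(key_step kl q)\<^sup>*\<^sup>* F G"
    by (rule rtranclp_shares_var_outside_key_imp_key_step[OF _ assms(3,2)])
  then obtain path where "path \<noteq> []" "hd path = F" "last path = G" "set path \<subseteq> q"
      "successively (key_step kl q) path"
    using rtranclp_imp_successively_path[of "key_step kl q" F G q] assms(3) key_step_def by blast
  then show ?thesis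
    unfolding successively_conv_nth key_step_def by blast
qed

end
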